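(* Let $A\in\mathbb{R}^{n\times n}$ be symmetric and let $X_0 = AWA$ for some matrix $W\in\mathbb{R}^{n\times n}$. Define iterates $$X_{k+1} = X_k + AS_k(S_k^\top A^2 S_k)^\dagger S_k^\top (A - A X_k A) S_k (S_k^\top A^2 S_k)^\dagger S_k^\top A,\qquad k\ge0,$$ for arbitrary matrices $S_k\in\mathbb{R}^{n\times\tau}$. Then for each $k\ge0$ there exists a matrix $Q_k$ such that $X_k - A^\dagger = A Q_k A$.
   Context: $A^\dagger$ denotes the Moore–Penrose pseudoinverse of $A$. *)

theory Defs
  imports "HOL-Analysis.Analysis"
begin

definition pinv :: "real^'n^'m \<Rightarrow> real^'m^'n" where
  "pinv A = (THE B. A ** B ** A = A \<and> B ** A ** B = B \<and>
                    transpose (A ** B) = A ** B \<and> transpose (B ** A) = B ** A)"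

end

theory Submission
  imports Defs
begin

text \<open>For every matrix \<open>A\<close> the pseudoinverse has the form \<open>A\<^sup>T G A\<^sup>T\<close>, namely with \<open>G\<close> any
  generalized inverse of \<open>A\<^sup>T A A\<^sup>T\<close>; the only analytic input is that \<open>A\<^sup>T A x = 0\<close> forces
  \<open>A x = 0\<close>, which lets one cancel Gram factors. For symmetric \<open>A\<close> this says
  \<open>A\<^sup>\<dagger> = A G A\<close>. The update of the iteration is itself of the form \<open>A M A\<close>, so by
  induction every \<open>X\<^sub>k - A\<^sup>\<dagger>\<close> stays of the form \<open>A Q A\<close>.\<close>

lemma matrix_add_rdistrib: "(B + C) ** (A::'a::semiring_1^'n^'m) = B ** A + C ** A"
  by (vector matrix_matrix_mult_def sum.distrib[symmetric] field_simps)

lemma matrix_diff_ldistrib: "(A::'a::ring_1^'n^'m) ** (B - C) = A ** B - A ** C"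
  by (vector matrix_matrix_mult_def sum_subtractf[symmetric] field_simps)

lemma matrix_diff_rdistrib: "(B - C) ** (A::'a::ring_1^'n^'m) = B ** A - C ** A"
  by (vector matrix_matrix_mult_def sum_subtractf[symmetric] field_simps)

lemma matrix_generalized_inverse_exists:
  fixes C :: "real^'n^'m"
  obtains G where "C ** G ** C = C"
proof -
  obtain g where g: "Vector_Spaces.linear (*s) (*s) g" "\<forall>v\<in>range ((*v) C). C *v g v = v"
    using vec.linear_exists_right_inverse_on[OF matrix_vector_mul_linear_gen vec.subspace_UNIV, of C]
    by blast
  have "C ** matrix g ** C = C"
    unfolding matrix_eq using g by (simp add: matrix_vector_mul_assoc[symmetric] matrix_works)
  then show thesis by (rule that)
qed

lemma gram_matrix_vector_eq_0:
  fixes A :: "real^'n^'m"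
  assumes "transpose A *v (A *v z) = 0"
  shows "A *v z = 0"
proof -
  have "(A *v z) \<bullet> (A *v z) = (z v* transpose A) \<bullet> (A *v z)" by simp
  also have "\<dots> = z \<bullet> (transpose A *v (A *v z))" by (rule dot_lmul_matrix)
  finally show ?thesis using assms by simp
qed

lemma gram_mult_left_cancel:
  fixes A :: "real^'n^'m" and X Y :: "real^'p^'n"
  assumes "transpose A ** A ** X = transpose A ** A ** Y"
  shows "A ** X = A ** Y"
  unfolding matrix_eq
proof
  fix v
  have "transpose A *v (A *v (X *v v - Y *v v))
      = (transpose A ** A ** X) *v v - (transpose A ** A ** Y) *v v"
    by (simp add: matrix_vector_mult_diff_distrib matrix_vector_mul_assoc matrix_mul_assoc)
  then have "transpose A *v (A *v (X *v v - Y *v v)) = 0"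
    using assms by simp
  then have "A *v (X *v v - Y *v v) = 0" by (rule gram_matrix_vector_eq_0)
  then show "(A ** X) *v v = (A ** Y) *v v"
    by (simp add: matrix_vector_mult_diff_distrib matrix_vector_mul_assoc)
qed

lemma gram_mult_right_cancel:
  fixes A :: "real^'n^'m" and X Y :: "real^'m^'p"
  assumes "X ** A ** transpose A = Y ** A ** transpose A"
  shows "X ** A = Y ** A"
proof -
  have "transpose (transpose A) ** transpose A ** transpose X
      = transpose (transpose A) ** transpose A ** transpose Y"
    using arg_cong[OF assms, of transpose] by (simp add: matrix_transpose_mul matrix_mul_assoc)
  then have "transpose A ** transpose X = transpose A ** transpose Y"
    by (rule gram_mult_left_cancel)
  then show ?thesis by (metis matrix_transpose_mul transpose_transpose)
qed

definition penrose_inverse :: "real^'n^'m \<Rightarrow> real^'m^'n \<Rightarrow> bool" where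
  "penrose_inverse A B \<longleftrightarrow> A ** B ** A = A \<and> B ** A ** B = B \<and>
     transpose (A ** B) = A ** B \<and> transpose (B ** A) = B ** A"

lemma penrose_inverse_unique:
  assumes "penrose_inverse A B" "penrose_inverse A C"
  shows "B = C"
proof -
  from assms have b1: "A ** B ** A = A" and b2: "B ** A ** B = B"
    and b3: "transpose (A ** B) = A ** B" and b4: "transpose (B ** A) = B ** A"
    and c1: "A ** C ** A = A" and c2: "C ** A ** C = C"
    and c3: "transpose (A ** C) = A ** C" and c4: "transpose (C ** A) = C ** A"
    by (auto simp: penrose_inverse_def)
  have "B = B ** transpose (A ** B)" using b2 b3 by (simp add: matrix_mul_assoc)
  also have "\<dots> = B ** transpose (A ** C ** A ** B)" using c1 by simp
  also have "\<dots> = B ** (A ** B) ** (A ** C)"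
    using b3 c3 by (simp add: matrix_transpose_mul matrix_mul_assoc)
  also have "\<dots> = B ** A ** C" using b2 by (simp add: matrix_mul_assoc)
  finally have B: "B = B ** A ** C" .
  have "C = transpose (C ** A) ** C" using c2 c4 by (simp add: matrix_mul_assoc)
  also have "\<dots> = transpose (C ** (A ** B ** A)) ** C" using b1 by simp
  also have "\<dots> = transpose ((C ** A) ** (B ** A)) ** C" by (simp add: matrix_mul_assoc)
  also have "\<dots> = (B ** A) ** ((C ** A) ** C)"
    using b4 c4 by (simp add: matrix_transpose_mul matrix_mul_assoc)
  also have "\<dots> = B ** A ** C" using c2 by (simp add: matrix_mul_assoc)
  finally show ?thesis using B by simp
qed

lemma pinv_eqI:
  assumes "penrose_inverse A B"
  shows "pinv A = B"
  unfolding pinv_def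
proof (rule the_equality)
  show "A ** B ** A = A \<and> B ** A ** B = B \<and> transpose (A ** B) = A ** B \<and> transpose (B ** A) = B ** A"
    using assms by (simp add: penrose_inverse_def)
next
  fix C
  assume "A ** C ** A = A \<and> C ** A ** C = C \<and> transpose (A ** C) = A ** C \<and> transpose (C ** A) = C ** A"
  then show "C = B"
    using penrose_inverse_unique[OF assms] by (simp add: penrose_inverse_def)
qed

lemma ginv_transpose_gram_cancel:
  fixes A :: "real^'n^'m" and G :: "real^'n^'m"
  defines "M \<equiv> transpose A ** A ** transpose A"
  assumes G: "M ** G ** M = M"
  shows "transpose A ** G ** M = transpose A" and "M ** G ** transpose A = transpose A"
proof -
  have "transpose A ** A ** (transpose A ** G ** M) = transpose A ** A ** transpose A"
    using G by (simp add: M_def matrix_mul_assoc)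
  then have "A ** (transpose A ** G ** M) = A ** transpose A"
    by (rule gram_mult_left_cancel)
  then have "transpose (transpose A) ** transpose A ** (G ** M)
      = transpose (transpose A) ** transpose A ** mat 1"
    by (simp add: matrix_mul_assoc)
  then have "transpose A ** (G ** M) = transpose A ** mat 1"
    by (rule gram_mult_left_cancel)
  then show "transpose A ** G ** M = transpose A"
    by (simp add: matrix_mul_assoc)
  have "(M ** G ** transpose A) ** A ** transpose A = transpose A ** A ** transpose A"
    using G by (simp add: M_def matrix_mul_assoc)
  then have "(M ** G ** transpose A) ** A = transpose A ** A"
    by (rule gram_mult_right_cancel)
  then have "(M ** G) ** transpose A ** transpose (transpose A)
      = mat 1 ** transpose A ** transpose (transpose A)"
    by (simp add: matrix_mul_assoc)
  then have "(M ** G) ** transpose A = mat 1 ** transpose A"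
    by (rule gram_mult_right_cancel)
  then show "M ** G ** transpose A = transpose A"
    by simp
qed

lemma penrose_inverse_transpose_sandwich:
  fixes A :: "real^'n^'m" and G :: "real^'n^'m"
  assumes G: "(transpose A ** A ** transpose A) ** G ** (transpose A ** A ** transpose A)
    = transpose A ** A ** transpose A"
  shows "penrose_inverse A (transpose A ** G ** transpose A)"
proof -
  define B where "B = transpose A ** G ** transpose A"
  have BAAt: "B ** A ** transpose A = transpose A"
    using ginv_transpose_gram_cancel(1)[OF G] by (simp add: B_def matrix_mul_assoc)
  have AtAB: "transpose A ** A ** B = transpose A"
    using ginv_transpose_gram_cancel(2)[OF G] by (simp add: B_def matrix_mul_assoc)
  have "(A ** B) ** A ** transpose A = A ** (B ** A ** transpose A)"
    by (simp add: matrix_mul_assoc)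
  also have "\<dots> = mat 1 ** A ** transpose A"
    using BAAt by simp
  finally have "(A ** B) ** A = mat 1 ** A"
    by (rule gram_mult_right_cancel)
  then have ABA: "A ** B ** A = A" by simp
  have "B ** A ** B = transpose A ** G ** (transpose A ** A ** B)"
    by (simp add: B_def matrix_mul_assoc)
  then have BAB: "B ** A ** B = B"
    using AtAB by (simp add: B_def)
  have BtAtA: "transpose B ** transpose A ** A = A"
    using arg_cong[OF AtAB, of transpose] by (simp add: matrix_transpose_mul matrix_mul_assoc)
  have "A ** B = transpose B ** transpose A"
    using AtAB by (metis BtAtA matrix_mul_assoc)
  then have AB: "transpose (A ** B) = A ** B" by (simp add: matrix_transpose_mul)
  have AAtBt: "A ** transpose A ** transpose B = A"
    using arg_cong[OF BAAt, of transpose] by (simp add: matrix_transpose_mul matrix_mul_assoc)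
  have "B ** A = transpose A ** transpose B"
    using BAAt by (metis AAtBt matrix_mul_assoc)
  then have BA: "transpose (B ** A) = B ** A" by (simp add: matrix_transpose_mul)
  show ?thesis
    using ABA BAB AB BA by (simp add: penrose_inverse_def B_def)
qed

lemma pinv_eq_transpose_sandwich:
  fixes A :: "real^'n^'m"
  obtains G where "pinv A = transpose A ** G ** transpose A"
proof -
  obtain G where "(transpose A ** A ** transpose A) ** G ** (transpose A ** A ** transpose A)
      = transpose A ** A ** transpose A"
    by (rule matrix_generalized_inverse_exists)
  then show thesis
    by (intro that pinv_eqI penrose_inverse_transpose_sandwich)
qed

theorem lemma4:
  fixes A W :: "real^'n^'n"
    and S :: "nat \<Rightarrow> real^'t^'n"
    and X :: "nat \<Rightarrow> real^'n^'n"
  assumes symA: "transpose A = A"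
    and X0: "X 0 = A ** W ** A"
    and Xstep: "\<And>k. X (Suc k) = X k +
        A ** S k ** pinv (transpose (S k) ** (A ** A) ** S k) ** transpose (S k)
          ** (A - A ** X k ** A) ** S k
          ** pinv (transpose (S k) ** (A ** A) ** S k) ** transpose (S k) ** A"
  shows "\<forall>k. \<exists>Q :: real^'n^'n. X k - pinv A = A ** Q ** A"
proof
  fix k
  obtain G where G: "pinv A = A ** G ** A"
    using pinv_eq_transpose_sandwich[of A] symA by metis
  show "\<exists>Q. X k - pinv A = A ** Q ** A"
  proof (induction k)
    case 0
    have "X 0 - pinv A = A ** (W - G) ** A"
      by (simp add: X0 G matrix_diff_ldistrib matrix_diff_rdistrib)
    then show ?case by blast
  next
    case (Suc k)
    then obtain Q where Q: "X k - pinv A = A ** Q ** A" by blast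
    define M where "M = S k ** pinv (transpose (S k) ** (A ** A) ** S k) ** transpose (S k)
          ** (A - A ** X k ** A) ** S k
          ** pinv (transpose (S k) ** (A ** A) ** S k) ** transpose (S k)"
    have "X (Suc k) - pinv A = (X k - pinv A) + A ** M ** A"
      by (simp add: Xstep M_def matrix_mul_assoc)
    also have "\<dots> = A ** (Q + M) ** A"
      by (simp add: Q matrix_add_ldistrib matrix_add_rdistrib matrix_mul_assoc)
    finally show ?case by blast
  qed
qed

end
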